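(* Let $p,q\in\mathcal{P}_d(\mathbb{R})$ and let $l$ be an integer with $0\le l\le d$ such that $\mathcal{F}_q(x)\le\mathcal{F}_p(x)+\frac{l}{d}$ for all $x\in\mathbb{R}$. Then there exist $q=q^{(0)},q^{(1)},\dots,q^{(l)}\in\mathcal{P}_d(\mathbb{R})$ with $q^{(k-1)}\lessdot q^{(k)}$ for $k=1,\dots,l$ and $p\le q^{(l)}$. Consequently, for every $r\in\mathcal{P}_d(\mathbb{R})$, \[ \mathcal{F}_{q\boxplus_d r}(x)\le\mathcal{F}_{p\boxplus_d r}(x)+\tfrac{l}{d}\quad\text{for all }x\in\mathbb{R}, \] and for every $r\in\mathcal{P}_d([0,\infty))$, \[ \mathcal{F}_{q\boxtimes_d r}(x)\le\mathcal{F}_{p\boxtimes_d r}(x)+\tfrac{l}{d}\quad\text{for all }x\in\mathbb{R}. \]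
   Context: $\mathcal{P}_d(K)$ is the set of monic degree-$d$ polynomials with all roots in $K$. For $p$ with roots $\lambda_i$, write $p(x)=\sum_{k=0}^d(-1)^k\binom{d}{k}\tilde e_k(p)x^{d-k}$ with $\tilde e_k(p)=\binom{d}{k}^{-1}e_k(\lambda_1,\dots,\lambda_d)$. Finite free convolutions: $\tilde e_k(p\boxplus_d q)=\sum_{i=0}^k\binom{k}{i}\tilde e_i(p)\tilde e_{k-i}(q)$ and $\tilde e_k(p\boxtimes_d q)=\tilde e_k(p)\tilde e_k(q)$. For real-rooted $p$, $\mathcal{F}_p(x)=\frac1d\#\{i:\lambda_i\le x\}$ (CDF of the empirical root distribution). Partial order: $p\le q$ means $\mathcal{F}_q(x)\le\mathcal{F}_p(x)$ for all $x$. Interlacing: for $p,q\in\mathcal{P}_d(\mathbb{R})$ with roots in non-decreasing order, $p\lessdot q$ means $\lambda_1(p)\le\lambda_1(q)\le\lambda_2(p)\le\lambda_2(q)\le\dots\le\lambda_d(p)\le\lambda_d(q)$. *)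

theory Defs
  imports "HOL-Computational_Algebra.Polynomial" Complex_Main
begin

definition Pd :: "nat \<Rightarrow> real set \<Rightarrow> real poly set" where
  "Pd d K = {p. \<exists>xs. length xs = d \<and> set xs \<subseteq> K \<and> p = (\<Prod>x\<leftarrow>xs. [:-x, 1:])}"

text \<open>Normalized elementary symmetric functions: coeff p (d-k) = (-1)^k (d choose k) etil_k(p).\<close>
definition etil :: "nat \<Rightarrow> real poly \<Rightarrow> nat \<Rightarrow> real" where
  "etil d p k = (-1)^k * coeff p (d - k) / real (d choose k)"

definition poly_of_etil :: "nat \<Rightarrow> (nat \<Rightarrow> real) \<Rightarrow> real poly" where
  "poly_of_etil d e = (\<Sum>k\<le>d. monom ((-1)^k * real (d choose k) * e k) (d - k))"

definition boxplus :: "nat \<Rightarrow> real poly \<Rightarrow> real poly \<Rightarrow> real poly" where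
  "boxplus d p q = poly_of_etil d
     (\<lambda>k. \<Sum>i\<le>k. real (k choose i) * etil d p i * etil d q (k - i))"

definition boxtimes :: "nat \<Rightarrow> real poly \<Rightarrow> real poly \<Rightarrow> real poly" where
  "boxtimes d p q = poly_of_etil d (\<lambda>k. etil d p k * etil d q k)"

definition rootcdf :: "nat \<Rightarrow> real poly \<Rightarrow> real \<Rightarrow> real" where
  "rootcdf d p x = real (\<Sum>a\<in>{a. poly p a = 0 \<and> a \<le> x}. order a p) / real d"

definition rleq :: "nat \<Rightarrow> real poly \<Rightarrow> real poly \<Rightarrow> bool" where
  "rleq d p q \<longleftrightarrow> (\<forall>x. rootcdf d q x \<le> rootcdf d p x)"

definition interlace :: "nat \<Rightarrow> real poly \<Rightarrow> real poly \<Rightarrow> bool" where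
  "interlace d p q \<longleftrightarrow> (\<exists>xs ys. length xs = d \<and> length ys = d \<and> sorted xs \<and> sorted ys \<and>
     p = (\<Prod>x\<leftarrow>xs. [:-x, 1:]) \<and> q = (\<Prod>y\<leftarrow>ys. [:-y, 1:]) \<and>
     (\<forall>i<d. xs ! i \<le> ys ! i \<and> (Suc i < d \<longrightarrow> ys ! i \<le> xs ! Suc i)))"

end

theory Submission
  imports Defs "HOL-Computational_Algebra.Fundamental_Theorem_Algebra"
begin

text \<open>
  With the roots of p and q sorted as a and c, the hypothesis F_q \<le> F_p + l/d says
  a_(i-l) \<le> c_i. Rotating the roots of p by l places, q is therefore obtained from p by
  replacing its roots one at a time, where at most l replacements move a root downwards; the
  polynomials with roots max(c_i, a_(i+k-l)) form the required interlacing chain.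

  For T = (\<cdot> \<boxplus>_d r) and T = (\<cdot> \<boxtimes>_d r) the value T(p)(z) is a symmetric multiaffine
  polynomial in the roots of p. By Grace--Walsh--Szego (proved from Laguerre's theorem on
  polar derivatives) it has no zero when Im z > 0 and all roots lie in the closed lower
  half-plane. So T preserves real-rootedness, and moving one root of p upwards gives a stable
  pencil, whose roots interlace by Hermite--Biehler: the root CDF of the image does not
  increase, and it increases by at most 1/d when the root moves downwards. Summing over the at
  most l downward moves gives the bound.
\<close>

section \<open>Polynomials given by their roots\<close>

abbreviation poly_of_roots :: "'a::comm_ring_1 list \<Rightarrow> 'a poly" where
  "poly_of_roots as \<equiv> \<Prod>a\<leftarrow>as. [:-a, 1:]"

lemma poly_poly_of_roots: "poly (poly_of_roots as) z = (\<Prod>a\<leftarrow>as. z - a)"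
  by (induction as) (simp_all add: algebra_simps)

lemma degree_poly_of_roots_le: "degree (poly_of_roots as) \<le> length as"
  by (rule order.trans[OF degree_prod_list_le])
     (auto simp: sum_list_triv intro: order.trans[OF sum_list_mono[where g="\<lambda>_. 1"]])

lemma poly_of_roots_perm: "mset as = mset bs \<Longrightarrow> poly_of_roots as = poly_of_roots bs"
  by (metis mset_map prod_mset_prod_list)

lemma order_poly_of_roots:
  fixes xs :: "'a::idom list"
  shows "order a (poly_of_roots xs) = count_list xs a"
proof (induction xs)
  case Nil then show ?case by (simp add: order_0I)
next
  case (Cons b xs)
  have "poly_of_roots xs \<noteq> 0" by (auto simp: prod_list_zero_iff simp del: mult_pCons_left)
  then have "order a ([:-b, 1:] * poly_of_roots xs) = order a [:-b, 1:] + order a (poly_of_roots xs)"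
    by (intro order_mult) (simp del: mult_pCons_left)
  moreover have "order a [:-b, 1:] = (if b = a then 1 else 0)"
    using order_power_n_n[of a 1] by (auto simp: order_0I)
  ultimately show ?case using Cons by (simp del: mult_pCons_left)
qed

fun esym :: "'a::comm_ring_1 list \<Rightarrow> nat \<Rightarrow> 'a" where
  "esym [] k = (if k = 0 then 1 else 0)"
| "esym (a # as) 0 = 1"
| "esym (a # as) (Suc k) = esym as (Suc k) + a * esym as k"

lemma esym_0 [simp]: "esym as 0 = 1"
  by (cases as) auto

lemma esym_eq_0: "length as < k \<Longrightarrow> esym as k = 0"
proof (induction as arbitrary: k)
  case (Cons a as) then show ?case by (cases k) auto
qed simp

lemma esym_map_of_real: "esym (map of_real as) k = (of_real (esym as k) :: 'a::{real_algebra_1,comm_ring_1})"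
proof (induction as arbitrary: k)
  case (Cons a as) then show ?case by (cases k) auto
qed simp

lemma esym_map_mult: "esym (map (\<lambda>b. t * b) bs) k = t ^ k * esym bs k"
proof (induction bs arbitrary: k)
  case (Cons a as) then show ?case by (cases k) (auto simp: algebra_simps)
qed simp

lemma esym_replicate: "esym (replicate n t) k = of_nat (n choose k) * t ^ k"
proof (induction n arbitrary: k)
  case (Suc n) then show ?case by (cases k) (auto simp: algebra_simps)
qed (auto simp: binomial_eq_0)

lemma coeff_poly_of_roots:
  "k \<le> length as \<Longrightarrow> coeff (poly_of_roots as) (length as - k) = (-1)^k * esym as k"
proof (induction as arbitrary: k)
  case (Cons a as)
  have split: "poly_of_roots (a # as) = smult (-a) (poly_of_roots as) + pCons 0 (poly_of_roots as)"
    by simp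
  have top: "coeff (poly_of_roots as) (Suc (length as)) = 0"
    using degree_poly_of_roots_le[of as] by (simp add: coeff_eq_0)
  show ?case
  proof (cases k)
    case 0
    then show ?thesis using Cons.IH[of 0] top by (simp add: split)
  next
    case (Suc j)
    show ?thesis
    proof (cases "j = length as")
      case True
      then show ?thesis using Suc Cons.IH[of j] by (simp add: split esym_eq_0)
    next
      case False
      then have "j < length as" using Cons.prems Suc by simp
      moreover have "length as - j = Suc (length as - Suc j)" using \<open>j < length as\<close> by simp
      ultimately show ?thesis using Cons.IH[of j] Cons.IH[of "Suc j"] Suc
        by (simp add: split algebra_simps)
    qed
  qed
qed simp

lemma poly_eq_sum_coeff:
  fixes p :: "'a::comm_semiring_1 poly"
  assumes "degree p \<le> N"
  shows "poly p x = (\<Sum>i\<le>N. coeff p i * x ^ i)"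
  unfolding poly_altdef by (rule sum.mono_neutral_left) (use assms in \<open>auto simp: coeff_eq_0\<close>)

lemma poly_poly_of_roots_esym:
  "poly (poly_of_roots as) z = (\<Sum>k\<le>length as. (-1)^k * esym as k * z ^ (length as - k))"
proof -
  let ?n = "length as"
  have "poly (poly_of_roots as) z = (\<Sum>i\<le>?n. coeff (poly_of_roots as) i * z ^ i)"
    by (rule poly_eq_sum_coeff[OF degree_poly_of_roots_le])
  also have "\<dots> = (\<Sum>i\<le>?n. coeff (poly_of_roots as) (?n - i) * z ^ (?n - i))"
    by (subst sum.atLeastAtMost_rev[of _ 0, simplified atLeast0AtMost]) simp
  also have "\<dots> = (\<Sum>k\<le>?n. (-1)^k * esym as k * z ^ (?n - k))"
    by (simp add: coeff_poly_of_roots)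
  finally show ?thesis .
qed

lemma etil_poly_of_roots:
  "length as = d \<Longrightarrow> k \<le> d \<Longrightarrow> etil d (poly_of_roots as) k = esym as k / real (d choose k)"
  unfolding etil_def using coeff_poly_of_roots[of k as] by simp

text \<open>Every symmetric multiaffine polynomial in the entries of \<open>as\<close> has this form.\<close>

definition esym_comb :: "(nat \<Rightarrow> 'a::comm_ring_1) \<Rightarrow> nat \<Rightarrow> 'a list \<Rightarrow> 'a" where
  "esym_comb c N as = (\<Sum>k\<le>N. c k * esym as k)"

lemma esym_comb_bound_indep:
  "length as \<le> N \<Longrightarrow> N \<le> N' \<Longrightarrow> esym_comb c N' as = esym_comb c N as"
  unfolding esym_comb_def
  by (rule sum.mono_neutral_right) (auto simp: esym_eq_0)

lemma esym_comb_Cons: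
  assumes "length (a # as) \<le> N"
  shows "esym_comb c N (a # as) = esym_comb c N as + a * esym_comb (\<lambda>k. c (Suc k)) N as"
proof -
  obtain M where N: "N = Suc M" using assms by (cases N) auto
  have "esym_comb c N (a # as) = c 0 + (\<Sum>j\<le>M. c (Suc j) * (esym as (Suc j) + a * esym as j))"
    unfolding esym_comb_def N sum.atMost_Suc_shift by simp
  also have "\<dots> = (c 0 + (\<Sum>j\<le>M. c (Suc j) * esym as (Suc j))) + a * (\<Sum>j\<le>M. c (Suc j) * esym as j)"
    by (simp add: algebra_simps sum.distrib sum_distrib_left)
  also have "c 0 + (\<Sum>j\<le>M. c (Suc j) * esym as (Suc j)) = esym_comb c N as"
    unfolding esym_comb_def N sum.atMost_Suc_shift by simp
  also have "(\<Sum>j\<le>M. c (Suc j) * esym as j) = esym_comb (\<lambda>k. c (Suc k)) N as"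
    unfolding esym_comb_def N using assms N by (simp add: esym_eq_0)
  finally show ?thesis .
qed

lemma esym_comb_replicate:
  "esym_comb c n (replicate n t) = (\<Sum>k\<le>n. c k * of_nat (n choose k) * t ^ k)"
  unfolding esym_comb_def esym_replicate by (simp add: mult.assoc)

lemma esym_comb_add_scaled:
  "esym_comb (\<lambda>k. c k + b * c' k) N as = esym_comb c N as + b * esym_comb c' N as"
  unfolding esym_comb_def by (simp add: algebra_simps sum.distrib sum_distrib_left)

lemma esym_comb_normalized_replicate:
  "esym_comb (\<lambda>i. \<alpha> i / of_nat (d choose i)) d (replicate d t) = (\<Sum>i\<le>d. \<alpha> i * (t ^ i :: complex))"
  unfolding esym_comb_replicate by (intro sum.cong refl) simp

section \<open>Laguerre and Grace--Walsh--Szego\<close>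

lemma Im_inverse_diff: "Im (inverse (t - w)) = (Im w - Im t) * (cmod (inverse (t - w)))^2"
proof -
  have "Im (inverse v) = - Im v * (cmod (inverse v))^2" for v
    by (simp add: norm_inverse cmod_power2 power_inverse divide_inverse)
  then have "Im (inverse (t - w)) = - Im (t - w) * (cmod (inverse (t - w)))^2" .
  then show ?thesis by (simp only: minus_complex.sel minus_diff_eq)
qed

lemma sum_list_cmod_sq_ge:
  fixes vs :: "complex list"
  assumes sum: "sum_list vs = of_nat n * u" and len: "length vs \<le> n"
  shows "real n * (cmod u)^2 \<le> (\<Sum>v\<leftarrow>vs. (cmod v)^2)"
proof -
  have expand: "(\<Sum>v\<leftarrow>ws. (cmod (v - u))^2)
      = (\<Sum>v\<leftarrow>ws. (cmod v)^2) - 2 * Re (sum_list ws * cnj u) + real (length ws) * (cmod u)^2"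
    for ws :: "complex list"
    by (induction ws) (simp_all add: cmod_power2 power2_diff algebra_simps)
  have "Re (sum_list vs * cnj u) = real n * (cmod u)^2"
    unfolding sum mult.assoc complex_norm_square[symmetric] by simp
  moreover have "0 \<le> (\<Sum>v\<leftarrow>vs. (cmod (v - u))^2)"
    by (rule sum_list_nonneg) auto
  moreover have "real (length vs) * (cmod u)^2 \<le> real n * (cmod u)^2"
    using len by (intro mult_right_mono) auto
  ultimately show ?thesis unfolding expand by linarith
qed

lemma laguerre_sum_nonzero:
  fixes t b :: complex and ws :: "complex list"
  assumes t: "Im t \<le> 0" and b: "Im b \<le> 0" and ws: "\<forall>w\<in>set ws. 0 < Im w"
    and len: "length ws \<le> n" and n: "1 \<le> n"
  shows "of_nat n + (b - t) * (\<Sum>w\<leftarrow>ws. inverse (t - w)) \<noteq> 0"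
proof
  let ?S = "\<Sum>w\<leftarrow>ws. inverse (t - w)"
  let ?N = "\<Sum>w\<leftarrow>ws. (cmod (inverse (t - w)))^2"
  assume eq: "of_nat n + (b - t) * ?S = 0"
  then have "b \<noteq> t" using n by auto
  define u where "u = inverse (t - b)"
  have S: "?S = of_nat n * u"
    using eq \<open>b \<noteq> t\<close> unfolding u_def by (simp add: field_simps)
  have "ws \<noteq> []"
    using S n \<open>b \<noteq> t\<close> by (auto simp: u_def)
  then obtain w0 ws' where ws0: "ws = w0 # ws'" by (cases ws) auto
  have Im_sum_list: "Im (sum_list vs) = (\<Sum>v\<leftarrow>vs. Im v)" for vs :: "complex list"
    by (induction vs) auto
  \<comment> \<open>Compare imaginary parts in ?S = n * u, using Cauchy--Schwarz to relate |u|^2 to ?N.\<close>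
  have "Im u \<le> - Im t * (cmod u)^2"
    using b unfolding u_def Im_inverse_diff by (simp add: algebra_simps mult_nonpos_nonneg)
  then have "real n * Im u \<le> real n * (- Im t * (cmod u)^2)"
    by (rule mult_left_mono) simp
  then have "real n * Im u \<le> - Im t * (real n * (cmod u)^2)"
    by (simp add: algebra_simps)
  also have "\<dots> \<le> - Im t * ?N"
    using sum_list_cmod_sq_ge[of "map (\<lambda>w. inverse (t - w)) ws" n u] S len t
    by (intro mult_left_mono) (auto simp: comp_def)
  also have "\<dots> < (\<Sum>w\<leftarrow>ws. Im w * (cmod (inverse (t - w)))^2) - Im t * ?N"
  proof -
    have "0 < Im w0 * (cmod (inverse (t - w0)))^2"
      using ws ws0 t by (auto intro!: mult_pos_pos)
    moreover have "0 \<le> (\<Sum>w\<leftarrow>ws'. Im w * (cmod (inverse (t - w)))^2)"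
      using ws ws0 by (intro sum_list_nonneg) auto
    ultimately show ?thesis using ws0 by simp
  qed
  also have "\<dots> = Im ?S"
    unfolding Im_sum_list map_map comp_def Im_inverse_diff
    by (simp add: sum_list_subtractf sum_list_const_mult algebra_simps)
  finally show False using S by simp
qed

lemma poly_pderiv_poly_of_roots:
  fixes ws :: "'a::field list"
  assumes "t \<notin> set ws"
  shows "poly (pderiv (poly_of_roots ws)) t = poly (poly_of_roots ws) t * (\<Sum>w\<leftarrow>ws. inverse (t - w))"
  using assms
proof (induction ws)
  case (Cons a ws)
  have "pderiv (poly_of_roots (a # ws)) = [:-a, 1:] * pderiv (poly_of_roots ws) + poly_of_roots ws"
    by (simp add: pderiv_mult pderiv_pCons del: mult_pCons_left)
  then show ?case
    using Cons by (simp add: poly_poly_of_roots field_simps del: mult_pCons_left)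
qed simp

lemma laguerre_polar_derivative:
  fixes f :: "complex poly"
  assumes deg: "degree f \<le> n" and n: "1 \<le> n" and f: "\<forall>s. Im s \<le> 0 \<longrightarrow> poly f s \<noteq> 0"
    and b: "Im b \<le> 0" and t: "Im t \<le> 0"
  shows "of_nat n * poly f t + (b - t) * poly (pderiv f) t \<noteq> 0"
proof -
  have "f \<noteq> 0" using f by (metis order_refl poly_0 zero_complex.sel(2))
  obtain ws where ws: "mset ws = proots f" using ex_mset by blast
  have f_eq: "f = smult (lead_coeff f) (poly_of_roots ws)"
    using complex_poly_decompose_multiset[of f] by (metis prod_mset_prod_list ws mset_map)
  have "length ws = degree f" using ws size_proots_complex[of f] by (metis size_mset)
  have roots: "0 < Im w" if "w \<in> set ws" for w
  proof -
    have "w \<in># proots f" using that ws by (metis set_mset_mset)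
    then show ?thesis using f \<open>f \<noteq> 0\<close> by force
  qed
  then have "t \<notin> set ws" using t by force
  then have "poly (poly_of_roots ws) t \<noteq> 0" by (auto simp: poly_poly_of_roots prod_list_zero_iff)
  moreover have "of_nat n + (b - t) * (\<Sum>w\<leftarrow>ws. inverse (t - w)) \<noteq> 0"
    using laguerre_sum_nonzero[OF t b _ _ n] roots \<open>length ws = degree f\<close> deg by auto
  ultimately have "lead_coeff f * poly (poly_of_roots ws) t * (of_nat n + (b - t) * (\<Sum>w\<leftarrow>ws. inverse (t - w))) \<noteq> 0"
    using \<open>f \<noteq> 0\<close> by simp
  also have "lead_coeff f * poly (poly_of_roots ws) t * (of_nat n + (b - t) * (\<Sum>w\<leftarrow>ws. inverse (t - w)))
     = of_nat n * poly f t + (b - t) * poly (pderiv f) t"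
    by (subst (1 2) f_eq) (simp add: pderiv_smult poly_pderiv_poly_of_roots[OF \<open>t \<notin> set ws\<close>] algebra_simps)
  finally show ?thesis .
qed

definition diagonal_poly :: "(nat \<Rightarrow> 'a::comm_ring_1) \<Rightarrow> nat \<Rightarrow> 'a poly" where
  "diagonal_poly c n = (\<Sum>k\<le>n. monom (c k * of_nat (n choose k)) k)"

lemma poly_diagonal_poly: "poly (diagonal_poly c n) t = esym_comb c n (replicate n t)"
  unfolding diagonal_poly_def esym_comb_replicate by (simp add: poly_sum poly_monom)

lemma degree_diagonal_poly: "degree (diagonal_poly c n) \<le> n"
  unfolding diagonal_poly_def by (intro degree_sum_le) (auto intro: order.trans[OF degree_monom_le])

lemma pderiv_diagonal_poly:
  "pderiv (diagonal_poly c (Suc n)) = smult (of_nat (Suc n)) (diagonal_poly (\<lambda>k. c (Suc k)) n)"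
proof -
  have "pderiv (diagonal_poly c (Suc n))
      = (\<Sum>k\<le>Suc n. monom (of_nat k * (c k * of_nat (Suc n choose k))) (k - 1))"
    unfolding diagonal_poly_def higher_pderiv_sum[where n = 1, simplified] pderiv_monom ..
  also have "\<dots> = (\<Sum>j\<le>n. monom (of_nat (Suc j) * (c (Suc j) * of_nat (Suc n choose Suc j))) j)"
    by (subst sum.atMost_Suc_shift) simp
  also have "\<dots> = (\<Sum>j\<le>n. smult (of_nat (Suc n)) (monom (c (Suc j) * of_nat (n choose j)) j))"
  proof (intro sum.cong refl)
    fix j
    have "(of_nat (Suc j) :: 'a) * of_nat (Suc n choose Suc j) = of_nat (Suc n) * of_nat (n choose j)"
      by (metis Suc_times_binomial of_nat_mult)
    then show "monom (of_nat (Suc j) * (c (Suc j) * of_nat (Suc n choose Suc j))) j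
        = smult (of_nat (Suc n)) (monom (c (Suc j) * of_nat (n choose j)) j)"
      by (simp add: smult_monom ac_simps)
  qed
  also have "\<dots> = smult (of_nat (Suc n)) (diagonal_poly (\<lambda>k. c (Suc k)) n)"
  proof -
    have "smult a (\<Sum>j\<le>m. f j) = (\<Sum>j\<le>m. smult a (f j))" for a and f :: "nat \<Rightarrow> 'a poly" and m
      by (induction m) (simp_all add: smult_add_right)
    then show ?thesis unfolding diagonal_poly_def by simp
  qed
  finally show ?thesis .
qed

lemma grace_walsh_szego:
  fixes as :: "complex list"
  assumes "\<forall>t. Im t \<le> 0 \<longrightarrow> esym_comb c (length as) (replicate (length as) t) \<noteq> 0"
    and "\<forall>a\<in>set as. Im a \<le> 0"
  shows "esym_comb c (length as) as \<noteq> 0"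
  using assms
proof (induction as arbitrary: c)
  case Nil
  then show ?case by (metis list.size(3) replicate_0 zero_complex.sel(2) order_refl)
next
  case (Cons b as)
  define n where "n = length as"
  define c' where "c' = (\<lambda>k. c (Suc k))"
  have Cons_n: "esym_comb c (Suc n) (x # xs) = esym_comb c n xs + x * esym_comb c' n xs"
    if "length xs = n" for x xs
    using that esym_comb_Cons[of x xs "Suc n" c] esym_comb_bound_indep[of xs n "Suc n"] unfolding c'_def by simp
  \<comment> \<open>Fixing the root b turns the symmetric multiaffine polynomial into one in the other roots,
      whose diagonal is the polar derivative of the old diagonal with pole b.\<close>
  define c2 where "c2 = (\<lambda>k. c k + b * c' k)"
  have "esym_comb c2 n (replicate n t) \<noteq> 0" if t: "Im t \<le> 0" for t
  proof -
    let ?D = "diagonal_poly c (Suc n)"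
    have "of_nat (Suc n) * poly ?D t + (b - t) * poly (pderiv ?D) t \<noteq> 0"
      using Cons.prems
      by (intro laguerre_polar_derivative[OF degree_diagonal_poly _ _ _ t]) (auto simp: poly_diagonal_poly n_def)
    also have "of_nat (Suc n) * poly ?D t + (b - t) * poly (pderiv ?D) t
        = of_nat (Suc n) * esym_comb c2 n (replicate n t)"
      using Cons_n[of "replicate n t" t]
      by (simp add: pderiv_diagonal_poly poly_diagonal_poly c2_def c'_def esym_comb_add_scaled algebra_simps)
    finally show ?thesis by simp
  qed
  then have "esym_comb c2 (length as) as \<noteq> 0"
    using Cons.IH[of c2] Cons.prems(2) by (simp add: n_def)
  then show ?case
    using Cons_n[of as b] by (simp add: n_def c2_def esym_comb_add_scaled)
qed

section \<open>Real-rootedness\<close>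

definition cpoly :: "real poly \<Rightarrow> complex \<Rightarrow> complex" where
  "cpoly p z = poly (map_poly of_real p) z"

lemma cpoly_pCons: "cpoly (pCons a p) z = of_real a + z * cpoly p z"
  unfolding cpoly_def by (simp add: map_poly_pCons)

lemma cpoly_0 [simp]: "cpoly 0 z = 0"
  unfolding cpoly_def by simp

lemma cpoly_1 [simp]: "cpoly 1 z = 1"
  unfolding cpoly_def by simp

lemma cpoly_add: "cpoly (p + q) z = cpoly p z + cpoly q z"
proof (induction p arbitrary: q rule: pCons_induct)
  case (pCons a p)
  then show ?case by (cases q) (auto simp: cpoly_pCons algebra_simps)
qed simp

lemma cpoly_smult: "cpoly (smult a p) z = of_real a * cpoly p z"
  by (induction p rule: pCons_induct) (auto simp: cpoly_pCons algebra_simps)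

lemma cpoly_mult: "cpoly (p * q) z = cpoly p z * cpoly q z"
  by (induction p rule: pCons_induct) (auto simp: cpoly_pCons cpoly_add cpoly_smult algebra_simps)

lemma cpoly_sum: "cpoly (\<Sum>k\<in>A. f k) z = (\<Sum>k\<in>A. cpoly (f k) z)"
  by (induction A rule: infinite_finite_induct) (auto simp: cpoly_add)

lemma cpoly_monom: "cpoly (monom a n) z = of_real a * z ^ n"
  unfolding cpoly_def by (simp add: poly_monom map_poly_monom)

lemma cpoly_poly_of_roots: "cpoly (poly_of_roots xs) z = (\<Prod>x\<leftarrow>xs. z - of_real x)"
  by (induction xs) (auto simp: cpoly_mult cpoly_pCons simp del: mult_pCons_left)

lemma cpoly_of_real: "cpoly p (of_real x) = of_real (poly p x)"
  by (induction p rule: pCons_induct) (auto simp: cpoly_pCons)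

lemma cpoly_cnj: "cpoly p (cnj z) = cnj (cpoly p z)"
  by (induction p rule: pCons_induct) (auto simp: cpoly_pCons)

lemma real_rooted_eq_poly_of_roots:
  fixes p :: "real poly"
  assumes "degree p \<le> d" and "coeff p d = 1" and "\<forall>z. cpoly p z = 0 \<longrightarrow> Im z = 0"
  shows "\<exists>xs. length xs = d \<and> p = poly_of_roots xs"
  using assms
proof (induction d arbitrary: p)
  case 0
  then have "p = 1" by (metis coeff_pCons_0 degree_0_id le_zero_eq one_pCons)
  then show ?case by (intro exI[of _ "[]"]) simp
next
  case (Suc d)
  have deg: "degree p = Suc d"
    using Suc.prems(1,2) by (metis le_antisym le_degree zero_neq_one)
  then have "\<not> constant (poly (map_poly (of_real :: real \<Rightarrow> complex) p))"
    by (simp add: constant_degree degree_map_poly)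
  then obtain z where z: "cpoly p z = 0"
    unfolding cpoly_def using fundamental_theorem_of_algebra by blast
  then have "z = of_real (Re z)" using Suc.prems(3) by (simp add: complex_eq_iff)
  then have "poly p (Re z) = 0" using z cpoly_of_real[of p "Re z"] by simp
  then obtain q where pq: "p = [:-Re z, 1:] * q" by (metis dvdE poly_eq_0_iff_dvd)
  then have "q \<noteq> 0" using deg by auto
  then have "degree q = d" using deg pq by (simp add: degree_mult_eq del: mult_pCons_left)
  moreover have "coeff q d = 1"
  proof -
    have "lead_coeff p = lead_coeff q"
      unfolding pq lead_coeff_mult by simp
    then show ?thesis using Suc.prems(2) deg \<open>degree q = d\<close> by simp
  qed
  moreover have "\<forall>z. cpoly q z = 0 \<longrightarrow> Im z = 0"
    using Suc.prems(3) pq by (auto simp: cpoly_mult simp del: mult_pCons_left)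
  ultimately obtain xs where "length xs = d" "q = poly_of_roots xs"
    using Suc.IH by blast
  then show ?case using pq by (intro exI[of _ "Re z # xs"]) simp
qed

section \<open>Interlacing of stable pencils\<close>

definition count_le :: "real list \<Rightarrow> real \<Rightarrow> nat" where
  "count_le xs x = length (filter (\<lambda>y. y \<le> x) xs)"

definition count_gt :: "real list \<Rightarrow> real \<Rightarrow> nat" where
  "count_gt xs x = length (filter (\<lambda>y. x < y) xs)"

lemma count_le_add_count_gt: "count_le xs x + count_gt xs x = length xs"
  unfolding count_le_def count_gt_def by (induction xs) auto

lemma count_gt_step:
  assumes "x < u" and "\<forall>y\<in>set xs. x < y \<longrightarrow> u \<le> y"
  shows "count_gt xs x = count_gt xs u + count_list xs u"
  using assms unfolding count_gt_def by (induction xs) auto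

lemma count_gt_remove1:
  "u \<in> set xs \<Longrightarrow> count_gt xs x = count_gt (remove1 u xs) x + (if x < u then 1 else 0)"
  unfolding count_gt_def by (induction xs) auto

lemma count_gt_filter_neq: "count_gt (filter (\<lambda>y. y \<noteq> u) xs) u = count_gt xs u"
  unfolding count_gt_def by (induction xs) auto

lemma prod_list_map_remove1:
  fixes f :: "'a \<Rightarrow> 'b::comm_monoid_mult"
  shows "x \<in> set xs \<Longrightarrow> prod_list (map f xs) = f x * prod_list (map f (remove1 x xs))"
  by (induction xs) (auto simp: algebra_simps)

lemma prod_list_map_split_count:
  fixes f :: "'a \<Rightarrow> 'b::comm_monoid_mult"
  shows "prod_list (map f xs) = f x ^ count_list xs x * prod_list (map f (filter (\<lambda>y. y \<noteq> x) xs))"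
  by (induction xs) (auto simp: algebra_simps)

lemma sign_prod_list_diff:
  fixes xs :: "real list"
  shows "u \<notin> set xs \<Longrightarrow> 0 < (\<Prod>y\<leftarrow>xs. u - y) * (-1) ^ count_gt xs u"
proof (induction xs)
  case (Cons a xs)
  then have IH: "0 < (\<Prod>y\<leftarrow>xs. u - y) * (-1) ^ count_gt xs u" and "a \<noteq> u" by auto
  have "(\<Prod>y\<leftarrow>a # xs. u - y) * (-1) ^ count_gt (a # xs) u
      = \<bar>u - a\<bar> * ((\<Prod>y\<leftarrow>xs. u - y) * (-1) ^ count_gt xs u)"
    by (cases "u < a") (auto simp: count_gt_def algebra_simps)
  moreover have "0 < \<bar>u - a\<bar> * ((\<Prod>y\<leftarrow>xs. u - y) * (-1) ^ count_gt xs u)"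
    using IH \<open>a \<noteq> u\<close> by simp
  ultimately show ?case by linarith
qed (simp add: count_gt_def)

text \<open>The parity hypotheses say that, read from the top, the roots alternate between \<open>ys\<close> and
  \<open>xs\<close>, starting with \<open>ys\<close>.\<close>

lemma count_gt_interlace_of_parity:
  fixes xs ys :: "real list"
  assumes disj: "set xs \<inter> set ys = {}"
    and xs: "\<forall>u\<in>set xs. count_list xs u = 1 \<and> odd (count_gt ys u + count_gt xs u)"
    and ys: "\<forall>v\<in>set ys. count_list ys v = 1 \<and> even (count_gt ys v + count_gt xs v)"
  shows "count_gt xs x \<le> count_gt ys x \<and> count_gt ys x \<le> count_gt xs x + 1"
proof (induction "card {r \<in> set xs \<union> set ys. x < r}" arbitrary: x rule: less_induct)
  case less
  define A where "A = {r \<in> set xs \<union> set ys. x < r}"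
  show ?case
  proof (cases "A = {}")
    case True
    then have "count_gt xs x = 0" "count_gt ys x = 0"
      unfolding A_def count_gt_def by (auto simp: filter_empty_conv)
    then show ?thesis by simp
  next
    case False
    define u where "u = Min A"
    have "finite A" unfolding A_def by auto
    then have "u \<in> A" and u_min: "\<forall>r\<in>A. u \<le> r" unfolding u_def using False by auto
    then have "x < u" unfolding A_def by simp
    have "{r \<in> set xs \<union> set ys. u < r} \<subset> A" using \<open>u \<in> A\<close> \<open>x < u\<close> unfolding A_def by auto
    then have IH: "count_gt xs u \<le> count_gt ys u \<and> count_gt ys u \<le> count_gt xs u + 1"
      using less.hyps psubset_card_mono[OF \<open>finite A\<close>] unfolding A_def by blast
    have steps: "count_gt xs x = count_gt xs u + count_list xs u"
                "count_gt ys x = count_gt ys u + count_list ys u"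
      using count_gt_step[OF \<open>x < u\<close>] u_min unfolding A_def by auto
    from \<open>u \<in> A\<close> consider "u \<in> set xs" | "u \<in> set ys" unfolding A_def by auto
    then show ?thesis
    proof cases
      case 1
      then have "count_list xs u = 1" "count_list ys u = 0" "odd (count_gt ys u + count_gt xs u)"
        using xs disj by (auto simp: count_list_0_iff)
      then show ?thesis using IH steps by presburger
    next
      case 2
      then have "count_list ys u = 1" "count_list xs u = 0" "even (count_gt ys u + count_gt xs u)"
        using ys disj by (auto simp: count_list_0_iff)
      then show ?thesis using IH steps by presburger
    qed
  qed
qed

lemma Im_of_real_mult: "Im (of_real c * w) = c * Im w"
  by simp

lemma stable_root_blow_up:
  fixes H :: "complex \<Rightarrow> complex" and u r :: real
  assumes cont: "isCont H (of_real u)" and Hu: "H (of_real u) = of_real r"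
    and stable: "\<forall>z. 0 < Im z \<longrightarrow> 0 \<le> Im ((z - of_real u) ^ m * H z)" and "0 < Im \<zeta>"
  shows "0 \<le> r * Im (\<zeta> ^ m)"
proof -
  \<comment> \<open>Along the ray u + \<epsilon>\<zeta> the hypothesis reads \<epsilon>^m * g \<epsilon> \<ge> 0, and g \<epsilon> tends to r * Im (\<zeta>^m).\<close>
  define g where "g = (\<lambda>\<epsilon>::real. Im (\<zeta> ^ m * H (of_real u + of_real \<epsilon> * \<zeta>)))"
  have "((\<lambda>\<epsilon>::real. of_real u + of_real \<epsilon> * \<zeta>) \<longlongrightarrow> of_real u) (at_right 0)"
    by (auto intro!: tendsto_eq_intros)
  then have "((\<lambda>\<epsilon>::real. H (of_real u + of_real \<epsilon> * \<zeta>)) \<longlongrightarrow> H (of_real u)) (at_right 0)"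
    by (rule isCont_tendsto_compose[OF cont])
  then have lim: "(g \<longlongrightarrow> Im (\<zeta> ^ m * H (of_real u))) (at_right 0)"
    unfolding g_def by (auto intro!: tendsto_intros)
  have "\<forall>\<^sub>F \<epsilon> in at_right 0. 0 \<le> g \<epsilon>"
  proof (rule eventually_at_rightI[of 0 1])
    fix \<epsilon> :: real assume "\<epsilon> \<in> {0<..<1}"
    then have "0 < \<epsilon>" by simp
    then have "0 \<le> Im ((of_real u + of_real \<epsilon> * \<zeta> - of_real u) ^ m * H (of_real u + of_real \<epsilon> * \<zeta>))"
      using \<open>0 < Im \<zeta>\<close> by (intro stable[rule_format]) simp
    also have "\<dots> = \<epsilon> ^ m * g \<epsilon>"
      unfolding g_def by (simp add: power_mult_distrib mult.assoc)
    finally show "0 \<le> g \<epsilon>"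
      using zero_less_power[OF \<open>0 < \<epsilon>\<close>, of m] by (simp add: zero_le_mult_iff)
  qed simp
  then have "0 \<le> Im (\<zeta> ^ m * H (of_real u))"
    by (rule tendsto_lowerbound[OF lim]) simp
  then show ?thesis using Hu by (simp add: algebra_simps)
qed

lemma Im_power_both_signs:
  assumes "2 \<le> m"
  obtains \<zeta> \<eta> :: complex where "0 < Im \<zeta>" "Im (\<zeta> ^ m) = 1" "0 < Im \<eta>" "Im (\<eta> ^ m) = -1"
proof
  show "0 < Im (cis (pi / (2 * real m)))"
    using assms by simp (rule sin_gt_zero, auto simp: field_simps)
  show "Im (cis (pi / (2 * real m)) ^ m) = 1"
    using assms by (simp add: DeMoivre)
  have "3 * pi / (2 * real m) \<le> 3 * pi / 4" using assms by (intro divide_left_mono) auto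
  then have "3 * pi / (2 * real m) < pi" using pi_gt_zero by linarith
  then show "0 < Im (cis (3 * pi / (2 * real m)))" using assms by (simp add: sin_gt_zero)
  have "real m * (3 * pi / (2 * real m)) = 3 * pi / 2" using assms by simp
  moreover have "sin (3 * pi / 2) = -1"
    using sin_periodic_pi[of "pi / 2"] by (simp add: algebra_simps)
  ultimately show "Im (cis (3 * pi / (2 * real m)) ^ m) = -1" using assms by (simp add: DeMoivre)
qed

lemma stable_root_simple:
  fixes H :: "complex \<Rightarrow> complex" and u r :: real
  assumes "isCont H (of_real u)" and "H (of_real u) = of_real r" and "r \<noteq> 0"
    and "1 \<le> m" and "\<forall>z. 0 < Im z \<longrightarrow> 0 \<le> Im ((z - of_real u) ^ m * H z)"
  shows "m = 1 \<and> 0 < r"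
proof -
  note blow_up = stable_root_blow_up[OF assms(1,2,5)]
  have "m = 1"
  proof (rule ccontr)
    assume "m \<noteq> 1"
    then have "2 \<le> m" using \<open>1 \<le> m\<close> by simp
    then obtain \<zeta> \<eta> where "0 < Im \<zeta>" "Im (\<zeta> ^ m) = 1" "0 < Im \<eta>" "Im (\<eta> ^ m) = -1"
      by (rule Im_power_both_signs)
    then show False using blow_up[of \<zeta>] blow_up[of \<eta>] \<open>r \<noteq> 0\<close> by simp
  qed
  moreover have "0 \<le> r" using blow_up[of \<i>] \<open>m = 1\<close> by simp
  ultimately show ?thesis using \<open>r \<noteq> 0\<close> by simp
qed

lemma stable_pair_root_simple:
  fixes xs ys :: "real list"
  assumes u: "u \<in> set xs" "u \<notin> set ys" and "s \<noteq> 0"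
    and stable: "\<forall>z. 0 < Im z \<longrightarrow> 0 \<le> s * Im ((\<Prod>x\<leftarrow>xs. z - of_real x) * cnj (\<Prod>y\<leftarrow>ys. z - of_real y))"
  shows "count_list xs u = 1 \<and> 0 < s * (\<Prod>x\<leftarrow>filter (\<lambda>x. x \<noteq> u) xs. u - x) * (\<Prod>y\<leftarrow>ys. u - y)"
proof -
  define m where "m = count_list xs u"
  have "1 \<le> m" using u unfolding m_def by (metis Suc_leI count_list_0_iff neq0_conv One_nat_def)
  define xs' where "xs' = filter (\<lambda>x. x \<noteq> u) xs"
  have prod_poly: "(\<Prod>x\<leftarrow>as. z - of_real x) = poly (poly_of_roots (map of_real as)) z" for as z
    using poly_poly_of_roots[of "map of_real as" z] by (simp add: comp_def)
  define H where "H = (\<lambda>z. of_real s * (\<Prod>x\<leftarrow>xs'. z - of_real x) * cnj (\<Prod>y\<leftarrow>ys. z - of_real y))"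
  have "isCont H (of_real u)"
    unfolding H_def prod_poly by (intro continuous_intros)
  moreover have "H (of_real u) = of_real (s * (\<Prod>x\<leftarrow>xs'. u - x) * (\<Prod>y\<leftarrow>ys. u - y))"
  proof -
    have "(\<Prod>x\<leftarrow>as. of_real u - of_real x) = (of_real (\<Prod>x\<leftarrow>as. u - x) :: complex)" for as
      by (induction as) auto
    then show ?thesis unfolding H_def by simp
  qed
  moreover have "s * (\<Prod>x\<leftarrow>xs'. u - x) * (\<Prod>y\<leftarrow>ys. u - y) \<noteq> 0"
    using \<open>s \<noteq> 0\<close> u(2) by (auto simp: xs'_def prod_list_zero_iff)
  moreover have "\<forall>z. 0 < Im z \<longrightarrow> 0 \<le> Im ((z - of_real u) ^ m * H z)"
  proof (intro allI impI)
    fix z :: complex assume "0 < Im z"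
    have "(\<Prod>x\<leftarrow>xs. z - of_real x) = (z - of_real u) ^ m * (\<Prod>x\<leftarrow>xs'. z - of_real x)"
      unfolding m_def xs'_def by (rule prod_list_map_split_count)
    then have "(z - of_real u) ^ m * H z
        = of_real s * ((\<Prod>x\<leftarrow>xs. z - of_real x) * cnj (\<Prod>y\<leftarrow>ys. z - of_real y))"
      unfolding H_def by (simp only: ac_simps)
    then show "0 \<le> Im ((z - of_real u) ^ m * H z)"
      using stable \<open>0 < Im z\<close> by (simp only: Im_of_real_mult)
  qed
  ultimately show ?thesis
    using stable_root_simple \<open>1 \<le> m\<close> unfolding m_def xs'_def by blast
qed

lemma stable_pair_root_sign:
  fixes xs ys :: "real list"
  assumes u: "u \<in> set xs" "u \<notin> set ys" and "s \<noteq> 0"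
    and stable: "\<forall>z. 0 < Im z \<longrightarrow> 0 \<le> s * Im ((\<Prod>x\<leftarrow>xs. z - of_real x) * cnj (\<Prod>y\<leftarrow>ys. z - of_real y))"
  shows "count_list xs u = 1 \<and> 0 < s * (-1) ^ (count_gt xs u + count_gt ys u)"
proof -
  define X' Y where "X' = (\<Prod>x\<leftarrow>filter (\<lambda>x. x \<noteq> u) xs. u - x)" and "Y = (\<Prod>y\<leftarrow>ys. u - y)"
  have "count_list xs u = 1" and "0 < s * X' * Y"
    using stable_pair_root_simple[OF assms] by (simp_all add: X'_def Y_def)
  moreover have "0 < X' * (-1) ^ count_gt xs u"
    using sign_prod_list_diff[of u "filter (\<lambda>x. x \<noteq> u) xs"] by (simp add: X'_def count_gt_filter_neq)
  moreover have "0 < Y * (-1) ^ count_gt ys u"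
    using sign_prod_list_diff[OF u(2)] by (simp add: Y_def)
  ultimately have "0 < (s * X' * Y) * ((X' * (-1) ^ count_gt xs u) * (Y * (-1) ^ count_gt ys u))"
    by simp
  also have "\<dots> = (X' * Y)^2 * (s * (-1) ^ (count_gt xs u + count_gt ys u))"
    by (simp add: power_add power2_eq_square algebra_simps)
  finally show ?thesis
    using \<open>count_list xs u = 1\<close> by (simp add: zero_less_mult_iff)
qed

lemma stable_pair_remove1:
  fixes xs ys :: "real list"
  assumes u: "u \<in> set xs" "u \<in> set ys"
    and stable: "\<forall>z. 0 < Im z \<longrightarrow> 0 \<le> Im ((\<Prod>y\<leftarrow>ys. z - of_real y) * cnj (\<Prod>x\<leftarrow>xs. z - of_real x))"
  shows "\<forall>z. 0 < Im z \<longrightarrow>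
    0 \<le> Im ((\<Prod>y\<leftarrow>remove1 u ys. z - of_real y) * cnj (\<Prod>x\<leftarrow>remove1 u xs. z - of_real x))"
proof (intro allI impI)
  fix z :: complex assume "0 < Im z"
  have "0 \<le> Im ((\<Prod>y\<leftarrow>ys. z - of_real y) * cnj (\<Prod>x\<leftarrow>xs. z - of_real x))"
    using stable \<open>0 < Im z\<close> by blast
  \<comment> \<open>The common root contributes the positive factor |z - u|^2.\<close>
  also have "(\<Prod>y\<leftarrow>ys. z - of_real y) * cnj (\<Prod>x\<leftarrow>xs. z - of_real x)
      = of_real ((cmod (z - of_real u))^2)
        * ((\<Prod>y\<leftarrow>remove1 u ys. z - of_real y) * cnj (\<Prod>x\<leftarrow>remove1 u xs. z - of_real x))"
    unfolding prod_list_map_remove1[OF u(1)] prod_list_map_remove1[OF u(2)] complex_norm_square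
    by (simp add: ac_simps)
  finally have "0 \<le> (cmod (z - of_real u))^2
      * Im ((\<Prod>y\<leftarrow>remove1 u ys. z - of_real y) * cnj (\<Prod>x\<leftarrow>remove1 u xs. z - of_real x))"
    by (simp only: Im_of_real_mult)
  moreover have "0 < (cmod (z - of_real u))^2" using \<open>0 < Im z\<close> by auto
  ultimately show "0 \<le> Im ((\<Prod>y\<leftarrow>remove1 u ys. z - of_real y) * cnj (\<Prod>x\<leftarrow>remove1 u xs. z - of_real x))"
    by (simp add: zero_le_mult_iff)
qed

theorem count_gt_interlace_of_stable:
  fixes xs ys :: "real list"
  assumes "\<forall>z. 0 < Im z \<longrightarrow> 0 \<le> Im ((\<Prod>y\<leftarrow>ys. z - of_real y) * cnj (\<Prod>x\<leftarrow>xs. z - of_real x))"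
  shows "count_gt xs x \<le> count_gt ys x \<and> count_gt ys x \<le> count_gt xs x + 1"
  using assms
proof (induction "length xs" arbitrary: xs ys x rule: less_induct)
  case less
  show ?case
  proof (cases "set xs \<inter> set ys = {}")
    case True
    show ?thesis
    proof (rule count_gt_interlace_of_parity[OF True]; intro ballI)
      fix u assume "u \<in> set xs"
      have stable: "\<forall>z. 0 < Im z \<longrightarrow>
          0 \<le> -1 * Im ((\<Prod>x\<leftarrow>xs. z - of_real x) * cnj (\<Prod>y\<leftarrow>ys. z - of_real y))"
        using less.prems by (simp add: mult.commute)
      have "u \<notin> set ys" using \<open>u \<in> set xs\<close> True by blast
      then show "count_list xs u = 1 \<and> odd (count_gt ys u + count_gt xs u)"
        using stable_pair_root_sign[OF \<open>u \<in> set xs\<close> _ _ stable] by simp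
    next
      fix v assume "v \<in> set ys"
      have "v \<notin> set xs" using \<open>v \<in> set ys\<close> True by blast
      then show "count_list ys v = 1 \<and> even (count_gt ys v + count_gt xs v)"
        using stable_pair_root_sign[OF \<open>v \<in> set ys\<close>, of xs 1] less.prems
        by (simp add: minus_one_power_iff split: if_splits)
    qed
  next
    case False
    then obtain u where u: "u \<in> set xs" "u \<in> set ys" by blast
    have "\<forall>z. 0 < Im z \<longrightarrow>
        0 \<le> Im ((\<Prod>y\<leftarrow>remove1 u ys. z - of_real y) * cnj (\<Prod>x\<leftarrow>remove1 u xs. z - of_real x))"
      using stable_pair_remove1[OF u less.prems] .
    moreover have "length (remove1 u xs) < length xs"
      using u(1) length_pos_if_in_set[OF u(1)] by (simp add: length_remove1)
    ultimately have "count_gt (remove1 u xs) x \<le> count_gt (remove1 u ys) x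
        \<and> count_gt (remove1 u ys) x \<le> count_gt (remove1 u xs) x + 1"
      using less.hyps[of "remove1 u xs"] by simp
    then show ?thesis
      using count_gt_remove1[OF u(1), of x] count_gt_remove1[OF u(2), of x] by simp
  qed
qed

section \<open>Root counts of sorted root lists\<close>

lemma rootcdf_poly_of_roots: "rootcdf d (poly_of_roots xs) x = real (count_le xs x) / real d"
proof -
  have roots: "{a. poly (poly_of_roots xs) a = 0 \<and> a \<le> x} = set (filter (\<lambda>y. y \<le> x) xs)"
    by (auto simp: poly_poly_of_roots prod_list_zero_iff)
  have "(\<Sum>a\<in>{a. poly (poly_of_roots xs) a = 0 \<and> a \<le> x}. order a (poly_of_roots xs))
      = (\<Sum>a\<in>set (filter (\<lambda>y. y \<le> x) xs). count_list (filter (\<lambda>y. y \<le> x) xs) a)"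
    unfolding roots order_poly_of_roots
    by (intro sum.cong refl) (auto simp: count_list_eq_length_filter filter_filter intro!: arg_cong[where f=length] filter_cong)
  also have "\<dots> = length (filter (\<lambda>y. y \<le> x) xs)" by (rule sum_count_set) auto
  finally show ?thesis unfolding rootcdf_def count_le_def by simp
qed

lemma count_le_take_drop:
  "count_le xs x = length (filter (\<lambda>y. y \<le> x) (take k xs)) + length (filter (\<lambda>y. y \<le> x) (drop k xs))"
  unfolding count_le_def by (metis append_take_drop_id filter_append length_append)

lemma count_le_sorted_ge:
  assumes "sorted xs" and "i < length xs" and "xs ! i \<le> x"
  shows "i + 1 \<le> count_le xs x"
proof -
  have "xs ! j \<le> x" if "j \<le> i" for j
    using sorted_nth_mono[OF assms(1) that assms(2)] assms(3) by simp
  then have "filter (\<lambda>y. y \<le> x) (take (Suc i) xs) = take (Suc i) xs"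
    by (auto simp: filter_id_conv in_set_conv_nth)
  then show ?thesis
    using assms(2) count_le_take_drop[of xs x "Suc i"] by simp
qed

lemma count_le_sorted_le:
  assumes "sorted xs" and "k < length xs" and "x < xs ! k"
  shows "count_le xs x \<le> k"
proof -
  have "\<not> xs ! j \<le> x" if "k \<le> j" "j < length xs" for j
    using sorted_nth_mono[OF assms(1) that] assms(3) by simp
  then have "filter (\<lambda>y. y \<le> x) (drop k xs) = []"
    by (auto simp: filter_empty_conv in_set_conv_nth)
  then show ?thesis
    using count_le_take_drop[of xs x k] length_filter_le[of _ "take k xs"] by simp
qed

lemma count_le_antimono:
  "list_all2 (\<le>) xs ys \<Longrightarrow> count_le ys x \<le> count_le xs x"
  by (induction xs ys rule: list_all2_induct) (auto simp: count_le_def)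

lemma Pd_sorted_rootsE:
  assumes "p \<in> Pd d K"
  obtains as where "length as = d" "sorted as" "set as \<subseteq> K" "p = poly_of_roots as"
proof -
  obtain xs where "length xs = d" "set xs \<subseteq> K" "p = poly_of_roots xs"
    using assms unfolding Pd_def by auto
  then show ?thesis
    by (intro that[of "sort xs"]) (auto intro: poly_of_roots_perm)
qed

lemma sorted_roots_shift:
  assumes "sorted as" "length as = d" "sorted cs" "length cs = d" "l \<le> i" "i < d"
    and "\<forall>x. rootcdf d (poly_of_roots cs) x \<le> rootcdf d (poly_of_roots as) x + real l / real d"
  shows "as ! (i - l) \<le> cs ! i"
proof (rule ccontr)
  assume "\<not> as ! (i - l) \<le> cs ! i"
  then have "count_le as (cs ! i) \<le> i - l"
    using assms by (intro count_le_sorted_le) auto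
  moreover have "i + 1 \<le> count_le cs (cs ! i)"
    using assms by (intro count_le_sorted_ge) auto
  moreover have "real (count_le cs (cs ! i)) / real d \<le> real (count_le as (cs ! i)) / real d + real l / real d"
    using assms(7) unfolding rootcdf_poly_of_roots by blast
  then have "real (count_le cs (cs ! i)) \<le> real (count_le as (cs ! i)) + real l"
    using assms(6) by (simp add: add_divide_distrib[symmetric] divide_le_cancel)
  ultimately show False using assms(5) by linarith
qed

section \<open>Transforms preserving stability\<close>

text \<open>By Grace--Walsh--Szego such a T preserves real-rootedness and moves the roots of its
  image monotonically with each root of its argument.\<close>

definition stable_transform :: "nat \<Rightarrow> (real poly \<Rightarrow> real poly) \<Rightarrow> bool" where
  "stable_transform d T \<longleftrightarrow> (\<exists>c :: complex \<Rightarrow> nat \<Rightarrow> complex.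
     (\<forall>as. length as = d \<longrightarrow> degree (T (poly_of_roots as)) \<le> d \<and> coeff (T (poly_of_roots as)) d = 1) \<and>
     (\<forall>as z. length as = d \<longrightarrow> cpoly (T (poly_of_roots as)) z = esym_comb (c z) d (map of_real as)) \<and>
     (\<forall>z t. 0 < Im z \<longrightarrow> Im t \<le> 0 \<longrightarrow> esym_comb (c z) d (replicate d t) \<noteq> 0))"

lemma stable_transformE:
  assumes "stable_transform d T"
  obtains c where
    "\<And>as. length as = d \<Longrightarrow> degree (T (poly_of_roots as)) \<le> d"
    "\<And>as. length as = d \<Longrightarrow> coeff (T (poly_of_roots as)) d = 1"
    "\<And>as z. length as = d \<Longrightarrow> cpoly (T (poly_of_roots as)) z = esym_comb (c z) d (map of_real as)"
    "\<And>z as. 0 < Im z \<Longrightarrow> length as = d \<Longrightarrow> \<forall>a\<in>set as. Im a \<le> 0 \<Longrightarrow> esym_comb (c z) d as \<noteq> 0"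
  using assms grace_walsh_szego unfolding stable_transform_def by metis

lemma stable_transform_real_rooted:
  assumes "stable_transform d T" and "length as = d"
  shows "\<exists>xs. length xs = d \<and> T (poly_of_roots as) = poly_of_roots xs"
proof -
  obtain c where deg: "degree (T (poly_of_roots as)) \<le> d" and lead: "coeff (T (poly_of_roots as)) d = 1"
    and eval: "\<And>z. cpoly (T (poly_of_roots as)) z = esym_comb (c z) d (map of_real as)"
    and nz: "\<And>z bs. 0 < Im z \<Longrightarrow> length bs = d \<Longrightarrow> \<forall>b\<in>set bs. Im b \<le> 0 \<Longrightarrow> esym_comb (c z) d bs \<noteq> 0"
    using stable_transformE[OF assms(1)] assms(2) by metis
  have upper: "cpoly (T (poly_of_roots as)) z \<noteq> 0" if "0 < Im z" for z
    using nz[OF that, of "map of_real as"] assms(2) by (simp add: eval)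
  have "Im z = 0" if "cpoly (T (poly_of_roots as)) z = 0" for z
  proof (rule ccontr)
    assume "Im z \<noteq> 0"
    then consider "0 < Im z" | "0 < Im (cnj z)" by force
    then show False
    proof cases
      case 2
      then show False using upper[OF 2] that by (simp add: cpoly_cnj)
    qed (use upper that in blast)
  qed
  then show ?thesis
    using real_rooted_eq_poly_of_roots[OF deg lead] by blast
qed

lemma stable_transform_pencil:
  assumes T: "stable_transform d T" and len: "length ss + 1 = d" and "\<alpha> \<le> \<beta>" and z: "0 < Im z"
  shows "0 \<le> Im (cpoly (T (poly_of_roots (\<beta> # ss))) z * cnj (cpoly (T (poly_of_roots (\<alpha> # ss))) z))"
proof (rule ccontr)
  obtain c where
    eval: "\<And>as. length as = d \<Longrightarrow> cpoly (T (poly_of_roots as)) z = esym_comb (c z) d (map of_real as)"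
    and nz: "\<And>as. length as = d \<Longrightarrow> \<forall>a\<in>set as. Im a \<le> 0 \<Longrightarrow> esym_comb (c z) d as \<noteq> 0"
    using stable_transformE[OF T] z by metis
  define e a where "e = esym_comb (c z) d (map of_real ss)"
    and "a = esym_comb (\<lambda>k. c z (Suc k)) d (map of_real ss)"
  have affine: "esym_comb (c z) d (g # map of_real ss) = e + g * a" for g
    unfolding e_def a_def by (rule esym_comb_Cons) (use len in simp)
  assume "\<not> 0 \<le> Im (cpoly (T (poly_of_roots (\<beta> # ss))) z * cnj (cpoly (T (poly_of_roots (\<alpha> # ss))) z))"
  then have "(\<alpha> - \<beta>) * Im (e * cnj a) < 0"
    using eval[of "\<alpha> # ss"] eval[of "\<beta> # ss"] affine len by (simp add: algebra_simps)
  then have "0 < Im (e * cnj a)"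
    using \<open>\<alpha> \<le> \<beta>\<close> mult_nonpos_nonpos[of "\<alpha> - \<beta>" "Im (e * cnj a)"] by linarith
  then have "a \<noteq> 0" by auto
  define g where "g = - e / a"
  have "g = - (e * cnj a) / of_real ((cmod a)^2)"
    unfolding g_def complex_norm_square using \<open>a \<noteq> 0\<close> by (simp add: field_simps)
  then have "Im g \<le> 0"
    using \<open>0 < Im (e * cnj a)\<close> by (simp add: divide_nonpos_nonneg)
  moreover have "esym_comb (c z) d (g # map of_real ss) = 0"
    using affine[of g] \<open>a \<noteq> 0\<close> by (simp add: g_def)
  ultimately show False
    using nz[of "g # map of_real ss"] len by auto
qed

lemma stable_transform_move_root:
  assumes T: "stable_transform d T" and len: "length ss + 1 = d" and "\<alpha> \<le> \<beta>"
  shows "rootcdf d (T (poly_of_roots (\<beta> # ss))) x \<le> rootcdf d (T (poly_of_roots (\<alpha> # ss))) x"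
    and "rootcdf d (T (poly_of_roots (\<alpha> # ss))) x \<le> rootcdf d (T (poly_of_roots (\<beta> # ss))) x + 1 / real d"
proof -
  obtain xs where xs: "length xs = d" "T (poly_of_roots (\<alpha> # ss)) = poly_of_roots xs"
    using stable_transform_real_rooted[OF T, of "\<alpha> # ss"] len by auto
  obtain ys where ys: "length ys = d" "T (poly_of_roots (\<beta> # ss)) = poly_of_roots ys"
    using stable_transform_real_rooted[OF T, of "\<beta> # ss"] len by auto
  have "count_gt xs x \<le> count_gt ys x \<and> count_gt ys x \<le> count_gt xs x + 1"
    using count_gt_interlace_of_stable stable_transform_pencil[OF T len \<open>\<alpha> \<le> \<beta>\<close>]
    unfolding xs(2) ys(2) cpoly_poly_of_roots by blast
  then have "count_le ys x \<le> count_le xs x \<and> count_le xs x \<le> count_le ys x + 1"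
    using count_le_add_count_gt[of xs x] count_le_add_count_gt[of ys x] xs(1) ys(1) by linarith
  moreover have "0 < real d" using len by simp
  ultimately show "rootcdf d (T (poly_of_roots (\<beta> # ss))) x \<le> rootcdf d (T (poly_of_roots (\<alpha> # ss))) x"
    and "rootcdf d (T (poly_of_roots (\<alpha> # ss))) x \<le> rootcdf d (T (poly_of_roots (\<beta> # ss))) x + 1 / real d"
    unfolding xs(2) ys(2) rootcdf_poly_of_roots by (simp_all add: divide_right_mono add_divide_distrib[symmetric])
qed

lemma stable_transform_replace_roots:
  assumes T: "stable_transform d T" and "length us = d" and "length vs = d"
  shows "j \<le> d \<Longrightarrow> rootcdf d (T (poly_of_roots (take j vs @ drop j us))) x
      \<le> rootcdf d (T (poly_of_roots us)) x + (\<Sum>i<j. of_bool (vs ! i < us ! i)) / real d"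
proof (induction j)
  case (Suc j)
  then have "j < d" by simp
  define ss where "ss = take j vs @ drop (Suc j) us"
  have "drop j us = us ! j # drop (Suc j) us"
    using \<open>j < d\<close> assms by (simp add: Cons_nth_drop_Suc)
  then have old: "poly_of_roots (take j vs @ drop j us) = poly_of_roots (us ! j # ss)"
    unfolding ss_def by (intro poly_of_roots_perm) simp
  have new: "poly_of_roots (take (Suc j) vs @ drop (Suc j) us) = poly_of_roots (vs ! j # ss)"
    unfolding ss_def using \<open>j < d\<close> assms by (intro poly_of_roots_perm) (simp add: take_Suc_conv_app_nth)
  have "length ss + 1 = d" unfolding ss_def using \<open>j < d\<close> assms by simp
  then have "rootcdf d (T (poly_of_roots (vs ! j # ss))) x
      \<le> rootcdf d (T (poly_of_roots (us ! j # ss))) x + of_bool (vs ! j < us ! j) / real d"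
    using stable_transform_move_root[OF T, of ss "vs ! j" "us ! j" x]
      stable_transform_move_root[OF T, of ss "us ! j" "vs ! j" x]
    by (cases "vs ! j < us ! j") auto
  then show ?case
    using Suc.IH \<open>j < d\<close> unfolding old new by (simp add: add_divide_distrib)
qed simp

theorem stable_transform_rootcdf_shift:
  assumes T: "stable_transform d T" and "p \<in> Pd d UNIV" and "q \<in> Pd d UNIV" and "l \<le> d"
    and hyp: "\<forall>x. rootcdf d q x \<le> rootcdf d p x + real l / real d"
  shows "rootcdf d (T q) x \<le> rootcdf d (T p) x + real l / real d"
proof -
  obtain as where as: "length as = d" "sorted as" "p = poly_of_roots as"
    using Pd_sorted_rootsE[OF \<open>p \<in> Pd d UNIV\<close>] by blast
  obtain cs where cs: "length cs = d" "sorted cs" "q = poly_of_roots cs"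
    using Pd_sorted_rootsE[OF \<open>q \<in> Pd d UNIV\<close>] by blast
  \<comment> \<open>Rotate the roots of p by l places; then only the first l roots of q can lie below their partners.\<close>
  define us where "us = drop (d - l) as @ take (d - l) as"
  have "length us = d" unfolding us_def using as \<open>l \<le> d\<close> by simp
  have "poly_of_roots us = p"
    unfolding us_def as(3) by (rule poly_of_roots_perm) (metis append_take_drop_id mset_append union_commute)
  have "of_bool (cs ! i < us ! i) \<le> (of_bool (i < l) :: real)" if "i < d" for i
  proof (cases "i < l")
    case False
    then have "us ! i = as ! (i - l)"
      unfolding us_def using that as \<open>l \<le> d\<close> by (simp add: nth_append)
    moreover have "as ! (i - l) \<le> cs ! i"
      using False that as cs hyp by (intro sorted_roots_shift) auto
    ultimately show ?thesis using False by simp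
  qed simp
  then have "(\<Sum>i<d. of_bool (cs ! i < us ! i)) \<le> (\<Sum>i<d. of_bool (i < l) :: real)"
    by (intro sum_mono) simp
  also have "\<dots> = real l"
  proof -
    have "{..<d} \<inter> {i. i < l} = {..<l}" using \<open>l \<le> d\<close> by auto
    then show ?thesis by (simp add: sum_of_bool_eq)
  qed
  finally have "(\<Sum>i<d. of_bool (cs ! i < us ! i)) / real d \<le> real l / real d"
    by (simp add: divide_right_mono)
  moreover have "rootcdf d (T q) x \<le> rootcdf d (T p) x + (\<Sum>i<d. of_bool (cs ! i < us ! i)) / real d"
    using stable_transform_replace_roots[OF T \<open>length us = d\<close> cs(1), of d x] cs \<open>length us = d\<close>
      \<open>poly_of_roots us = p\<close> by simp
  ultimately show ?thesis by linarith
qed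

section \<open>Finite free convolutions\<close>

lemma degree_poly_of_etil: "degree (poly_of_etil d e) \<le> d"
  unfolding poly_of_etil_def by (intro degree_sum_le) (auto intro: order.trans[OF degree_monom_le])

lemma coeff_poly_of_etil_top: "coeff (poly_of_etil d e) d = e 0"
proof -
  have "coeff (poly_of_etil d e) d = (\<Sum>k\<le>d. if k = 0 then e k else 0)"
    unfolding poly_of_etil_def coeff_sum coeff_monom by (intro sum.cong refl) auto
  then show ?thesis by simp
qed

lemma cpoly_poly_of_etil:
  "cpoly (poly_of_etil d e) z = (\<Sum>k\<le>d. of_real ((-1)^k * real (d choose k) * e k) * z ^ (d - k))"
  unfolding poly_of_etil_def cpoly_sum cpoly_monom ..

lemma etil_0_poly_of_roots: "length as = d \<Longrightarrow> etil d (poly_of_roots as) 0 = 1"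
  using etil_poly_of_roots[of as d 0] by simp

lemma sum_mult_etil_eq_esym_comb:
  fixes \<alpha> :: "nat \<Rightarrow> complex"
  assumes "length as = d"
  shows "(\<Sum>i\<le>d. \<alpha> i * of_real (etil d (poly_of_roots as) i))
    = esym_comb (\<lambda>i. \<alpha> i / of_nat (d choose i)) d (map of_real as)"
  unfolding esym_comb_def using assms
  by (intro sum.cong refl) (simp add: etil_poly_of_roots esym_map_of_real divide_inverse of_real_inverse ac_simps)

lemma boxtimes_diagonal:
  fixes z t :: complex
  assumes "length bs = d"
  shows "(\<Sum>k\<le>d. of_real ((-1)^k * real (d choose k) * etil d (poly_of_roots bs) k) * z ^ (d - k) * t ^ k)
    = (\<Prod>b\<leftarrow>bs. z - t * of_real b)"
proof -
  have "(\<Sum>k\<le>d. of_real ((-1)^k * real (d choose k) * etil d (poly_of_roots bs) k) * z ^ (d - k) * t ^ k)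
      = (\<Sum>k\<le>d. (-1)^k * esym (map (\<lambda>b. t * of_real b) bs) k * z ^ (d - k))"
  proof (intro sum.cong refl)
    fix k assume "k \<in> {..d}"
    then show "of_real ((-1)^k * real (d choose k) * etil d (poly_of_roots bs) k) * z ^ (d - k) * t ^ k
        = (-1)^k * esym (map (\<lambda>b. t * of_real b) bs) k * z ^ (d - k)"
      using esym_map_mult[of t "map of_real bs" k] assms
      by (simp add: etil_poly_of_roots esym_map_of_real comp_def)
  qed
  also have "\<dots> = (\<Prod>b\<leftarrow>bs. z - t * of_real b)"
    using poly_poly_of_roots_esym[of "map (\<lambda>b. t * of_real b) bs" z]
      poly_poly_of_roots[of "map (\<lambda>b. t * of_real b) bs" z] assms
    by (simp add: comp_def)
  finally show ?thesis .
qed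

lemma stable_transform_boxtimes:
  assumes "r \<in> Pd d {0..}"
  shows "stable_transform d (\<lambda>p. boxtimes d p r)"
proof -
  obtain bs where bs: "length bs = d" "set bs \<subseteq> {0..}" "r = poly_of_roots bs"
    using Pd_sorted_rootsE[OF assms] by blast
  define \<alpha> where "\<alpha> = (\<lambda>z k. complex_of_real ((-1)^k * real (d choose k) * etil d r k) * z ^ (d - k))"
  show ?thesis unfolding stable_transform_def
  proof (intro exI[of _ "\<lambda>z k. \<alpha> z k / of_nat (d choose k)"] conjI allI impI)
    fix as :: "real list" assume as: "length as = d"
    show "degree (boxtimes d (poly_of_roots as) r) \<le> d"
      unfolding boxtimes_def by (rule degree_poly_of_etil)
    show "coeff (boxtimes d (poly_of_roots as) r) d = 1"
      unfolding boxtimes_def coeff_poly_of_etil_top using as bs by (simp add: etil_0_poly_of_roots)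
    fix z
    have "cpoly (boxtimes d (poly_of_roots as) r) z = (\<Sum>k\<le>d. \<alpha> z k * of_real (etil d (poly_of_roots as) k))"
      unfolding boxtimes_def cpoly_poly_of_etil \<alpha>_def by (simp add: ac_simps)
    then show "cpoly (boxtimes d (poly_of_roots as) r) z
        = esym_comb (\<lambda>k. \<alpha> z k / of_nat (d choose k)) d (map of_real as)"
      using sum_mult_etil_eq_esym_comb[OF as] by simp
  next
    fix z t :: complex assume "0 < Im z" and "Im t \<le> 0"
    have "esym_comb (\<lambda>k. \<alpha> z k / of_nat (d choose k)) d (replicate d t) = (\<Prod>b\<leftarrow>bs. z - t * of_real b)"
      unfolding esym_comb_normalized_replicate \<alpha>_def bs(3) boxtimes_diagonal[OF bs(1), symmetric] ..
    moreover have "0 < Im (z - t * of_real b)" if "b \<in> set bs" for b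
    proof -
      have "Im t * b \<le> 0" using that bs(2) \<open>Im t \<le> 0\<close> by (auto intro: mult_nonpos_nonneg)
      then show ?thesis using \<open>0 < Im z\<close> by simp
    qed
    ultimately show "esym_comb (\<lambda>k. \<alpha> z k / of_nat (d choose k)) d (replicate d t) \<noteq> 0"
      by (fastforce simp: prod_list_zero_iff)
  qed
qed

definition boxplus_eval :: "nat \<Rightarrow> complex \<Rightarrow> (nat \<Rightarrow> complex) \<Rightarrow> (nat \<Rightarrow> complex) \<Rightarrow> complex" where
  "boxplus_eval d z A B =
     (\<Sum>k\<le>d. (-1)^k * of_nat (d choose k) * z^(d-k) * (\<Sum>i\<le>k. of_nat (k choose i) * A i * B (k - i)))"

definition boxplus_eval_coeff :: "nat \<Rightarrow> complex \<Rightarrow> (nat \<Rightarrow> complex) \<Rightarrow> nat \<Rightarrow> complex" where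
  "boxplus_eval_coeff d z B i =
     (\<Sum>k\<le>d. if i \<le> k then (-1)^k * of_nat (d choose k) * z^(d-k) * of_nat (k choose i) * B (k - i) else 0)"

lemma cpoly_boxplus:
  "cpoly (boxplus d p r) z = boxplus_eval d z (\<lambda>i. of_real (etil d p i)) (\<lambda>i. of_real (etil d r i))"
  unfolding boxplus_def cpoly_poly_of_etil boxplus_eval_def by (intro sum.cong refl) (simp add: algebra_simps)

lemma boxplus_eval_commute: "boxplus_eval d z A B = boxplus_eval d z B A"
proof -
  have "(\<Sum>i\<le>k. of_nat (k choose i) * A i * B (k - i)) = (\<Sum>i\<le>k. of_nat (k choose i) * B i * A (k - i))"
    for k and A B :: "nat \<Rightarrow> complex"
  proof -
    have "(\<Sum>i\<le>k. of_nat (k choose i) * A i * B (k - i))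
        = (\<Sum>i\<le>k. of_nat (k choose (k - i)) * A (k - i) * B (k - (k - i)))"
      by (subst sum.atLeastAtMost_rev[of _ 0, simplified atLeast0AtMost]) simp
    also have "\<dots> = (\<Sum>i\<le>k. of_nat (k choose i) * B i * A (k - i))"
      by (intro sum.cong refl) (auto simp: binomial_symmetric[symmetric])
    finally show ?thesis .
  qed
  then show ?thesis unfolding boxplus_eval_def by simp
qed

lemma boxplus_eval_linear: "boxplus_eval d z A B = (\<Sum>i\<le>d. boxplus_eval_coeff d z B i * A i)"
proof -
  let ?t = "\<lambda>k i. (-1)^k * of_nat (d choose k) * z^(d-k) * of_nat (k choose i) * B (k - i) * A i"
  have "boxplus_eval d z A B = (\<Sum>k\<le>d. \<Sum>i\<le>d. if i \<le> k then ?t k i else 0)"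
    unfolding boxplus_eval_def
  proof (intro sum.cong refl)
    fix k assume "k \<in> {..d}"
    then have "{i\<in>{..d}. i \<le> k} = {..k}" by auto
    then have "(\<Sum>i\<le>d. if i \<le> k then ?t k i else 0) = (\<Sum>i\<le>k. ?t k i)"
      by (simp add: sum.inter_filter[symmetric])
    then show "(-1)^k * of_nat (d choose k) * z^(d-k) * (\<Sum>i\<le>k. of_nat (k choose i) * A i * B (k - i))
        = (\<Sum>i\<le>d. if i \<le> k then ?t k i else 0)"
      by (simp add: sum_distrib_left ac_simps)
  qed
  also have "\<dots> = (\<Sum>i\<le>d. boxplus_eval_coeff d z B i * A i)"
    unfolding boxplus_eval_coeff_def sum_distrib_right by (subst sum.swap) (intro sum.cong refl, auto)
  finally show ?thesis .
qed

lemma boxplus_eval_powers: "boxplus_eval d z (\<lambda>i. s ^ i) (\<lambda>i. t ^ i) = (z - (s + t)) ^ d"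
proof -
  have "boxplus_eval d z (\<lambda>i. s ^ i) (\<lambda>i. t ^ i) = (\<Sum>k\<le>d. (-1)^k * of_nat (d choose k) * z^(d-k) * (s + t)^k)"
    unfolding boxplus_eval_def binomial_ring[of s t] by (simp add: ac_simps)
  also have "\<dots> = (\<Sum>k\<le>d. of_nat (d choose k) * (-(s + t))^k * z^(d-k))"
    by (intro sum.cong refl) (subst power_minus, simp only: ac_simps)
  also have "\<dots> = (-(s + t) + z) ^ d"
    by (rule binomial_ring[symmetric])
  also have "-(s + t) + z = z - (s + t)" by simp
  finally show ?thesis .
qed

lemma boxplus_eval_nonzero:
  assumes "length bs = d" and "0 < Im z" and "Im t \<le> 0"
  shows "boxplus_eval d z (\<lambda>i. t ^ i) (\<lambda>i. of_real (etil d (poly_of_roots bs) i)) \<noteq> 0"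
proof -
  \<comment> \<open>By symmetry this is multiaffine in the roots of r, and its own diagonal is the
      convolution of two d-fold roots, which is again a d-fold root.\<close>
  let ?\<beta> = "\<lambda>j. boxplus_eval_coeff d z (\<lambda>i. t ^ i) j / of_nat (d choose j)"
  have "boxplus_eval d z (\<lambda>i. t ^ i) (\<lambda>i. of_real (etil d (poly_of_roots bs) i))
      = boxplus_eval d z (\<lambda>i. of_real (etil d (poly_of_roots bs) i)) (\<lambda>i. t ^ i)"
    by (rule boxplus_eval_commute)
  also have "\<dots> = esym_comb ?\<beta> d (map of_real bs)"
    unfolding boxplus_eval_linear by (rule sum_mult_etil_eq_esym_comb[OF assms(1)])
  also have "\<dots> \<noteq> 0"
  proof (rule grace_walsh_szego[of _ "map of_real bs", unfolded length_map assms(1)]; intro allI impI ballI)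
    fix s :: complex assume "Im s \<le> 0"
    have "esym_comb ?\<beta> d (replicate d s) = boxplus_eval d z (\<lambda>i. s ^ i) (\<lambda>i. t ^ i)"
      unfolding esym_comb_normalized_replicate boxplus_eval_linear by (simp add: ac_simps)
    also have "\<dots> = (z - (s + t)) ^ d" by (rule boxplus_eval_powers)
    also have "\<dots> \<noteq> 0" using \<open>0 < Im z\<close> \<open>Im s \<le> 0\<close> \<open>Im t \<le> 0\<close> by auto
    finally show "esym_comb ?\<beta> d (replicate d s) \<noteq> 0" .
  qed auto
  finally show ?thesis .
qed

lemma stable_transform_boxplus:
  assumes "r \<in> Pd d UNIV"
  shows "stable_transform d (\<lambda>p. boxplus d p r)"
proof -
  obtain bs where bs: "length bs = d" "r = poly_of_roots bs"
    using Pd_sorted_rootsE[OF assms] by blast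
  define R where "R = (\<lambda>j. complex_of_real (etil d r j))"
  define c where "c = (\<lambda>z i. boxplus_eval_coeff d z R i / of_nat (d choose i))"
  show ?thesis unfolding stable_transform_def
  proof (intro exI[of _ c] conjI allI impI)
    fix as :: "real list" assume as: "length as = d"
    show "degree (boxplus d (poly_of_roots as) r) \<le> d"
      unfolding boxplus_def by (rule degree_poly_of_etil)
    show "coeff (boxplus d (poly_of_roots as) r) d = 1"
      unfolding boxplus_def coeff_poly_of_etil_top using as bs by (simp add: etil_0_poly_of_roots)
    show "cpoly (boxplus d (poly_of_roots as) r) z = esym_comb (c z) d (map of_real as)" for z
      unfolding cpoly_boxplus boxplus_eval_linear c_def R_def[symmetric]
      by (rule sum_mult_etil_eq_esym_comb[OF as])
  next
    fix z t :: complex assume "0 < Im z" and "Im t \<le> 0"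
    have "esym_comb (c z) d (replicate d t) = boxplus_eval d z (\<lambda>i. t ^ i) R"
      unfolding c_def esym_comb_normalized_replicate boxplus_eval_linear by (simp add: ac_simps)
    then show "esym_comb (c z) d (replicate d t) \<noteq> 0"
      using boxplus_eval_nonzero[OF bs(1) \<open>0 < Im z\<close> \<open>Im t \<le> 0\<close>] by (simp add: R_def bs(2))
  qed
qed

section \<open>The interlacing chain\<close>

text \<open>The roots of the k-th polynomial of the interlacing chain from q (roots \<open>cs\<close>) up towards
  p (roots \<open>as\<close>): the i-th root is raised to the (i + k - l)-th root of p.\<close>

definition chain_roots :: "real list \<Rightarrow> real list \<Rightarrow> nat \<Rightarrow> nat \<Rightarrow> real list" where
  "chain_roots as cs l k =
     map (\<lambda>i. if l \<le> i + k then max (cs ! i) (as ! (i + k - l)) else cs ! i) [0..<length cs]"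

lemma length_chain_roots [simp]: "length (chain_roots as cs l k) = length cs"
  unfolding chain_roots_def by simp

lemma nth_chain_roots:
  "i < length cs \<Longrightarrow> chain_roots as cs l k ! i = (if l \<le> i + k then max (cs ! i) (as ! (i + k - l)) else cs ! i)"
  unfolding chain_roots_def by simp

context
  fixes as cs :: "real list" and l :: nat
  assumes sorted: "sorted as" "sorted cs" and len: "length as = length cs"
begin

lemma sorted_chain_roots: "k \<le> l \<Longrightarrow> sorted (chain_roots as cs l k)"
  unfolding sorted_iff_nth_mono
proof (intro allI impI)
  fix i j assume "k \<le> l" "i \<le> j" "j < length (chain_roots as cs l k)"
  then have "j < length cs" by simp
  have "cs ! i \<le> cs ! j" using sorted(2) \<open>i \<le> j\<close> \<open>j < length cs\<close> by (simp add: sorted_nth_mono)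
  moreover have "as ! (i + k - l) \<le> as ! (j + k - l)" if "l \<le> i + k"
    using sorted(1) \<open>i \<le> j\<close> \<open>j < length cs\<close> len \<open>k \<le> l\<close> that by (intro sorted_nth_mono) auto
  ultimately show "chain_roots as cs l k ! i \<le> chain_roots as cs l k ! j"
    using \<open>i \<le> j\<close> \<open>j < length cs\<close> by (auto simp: nth_chain_roots le_max_iff_disj)
qed

lemma chain_roots_interlace:
  assumes "1 \<le> k" "k \<le> l" "i < length cs"
  shows "chain_roots as cs l (k - 1) ! i \<le> chain_roots as cs l k ! i"
    and "Suc i < length cs \<Longrightarrow> chain_roots as cs l k ! i \<le> chain_roots as cs l (k - 1) ! Suc i"
proof -
  have "as ! (i + (k - 1) - l) \<le> as ! (i + k - l)"
    using sorted(1) assms len by (intro sorted_nth_mono) auto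
  then show "chain_roots as cs l (k - 1) ! i \<le> chain_roots as cs l k ! i"
    using assms by (auto simp: nth_chain_roots le_max_iff_disj)
next
  assume "Suc i < length cs"
  then have "cs ! i \<le> cs ! Suc i" using sorted(2) by (simp add: sorted_nth_mono)
  moreover have "Suc i + (k - 1) = i + k" using assms by simp
  ultimately show "chain_roots as cs l k ! i \<le> chain_roots as cs l (k - 1) ! Suc i"
    using assms \<open>Suc i < length cs\<close> by (auto simp: nth_chain_roots le_max_iff_disj)
qed

end

theorem interlacing_chain_exists:
  assumes "p \<in> Pd d UNIV" and "q \<in> Pd d UNIV"
    and hyp: "\<forall>x. rootcdf d q x \<le> rootcdf d p x + real l / real d"
  shows "\<exists>qs :: nat \<Rightarrow> real poly. qs 0 = q \<and> (\<forall>k\<le>l. qs k \<in> Pd d UNIV) \<and>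
            (\<forall>k\<in>{1..l}. interlace d (qs (k - 1)) (qs k)) \<and> rleq d p (qs l)"
proof -
  obtain as where as: "length as = d" "sorted as" "p = poly_of_roots as"
    using Pd_sorted_rootsE[OF \<open>p \<in> Pd d UNIV\<close>] by blast
  obtain cs where cs: "length cs = d" "sorted cs" "q = poly_of_roots cs"
    using Pd_sorted_rootsE[OF \<open>q \<in> Pd d UNIV\<close>] by blast
  note len = as(1)[folded cs(1)]
  define qs where "qs = (\<lambda>k. poly_of_roots (chain_roots as cs l k))"
  have "chain_roots as cs l 0 = cs"
  proof (rule nth_equalityI)
    fix i assume "i < length (chain_roots as cs l 0)"
    then have "i < d" using cs by simp
    then show "chain_roots as cs l 0 ! i = cs ! i"
      using sorted_roots_shift[OF as(2,1) cs(2,1) _ _ hyp[unfolded as(3) cs(3)]] cs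
      by (auto simp: nth_chain_roots)
  qed simp
  moreover have "interlace d (qs (k - 1)) (qs k)" if "k \<in> {1..l}" for k
    unfolding interlace_def qs_def
    using that cs(1) chain_roots_interlace[OF as(2) cs(2) len] sorted_chain_roots[OF as(2) cs(2) len]
    by (intro exI[of _ "chain_roots as cs l (k - 1)"] exI[of _ "chain_roots as cs l k"]) auto
  moreover have "rleq d p (qs l)"
  proof -
    have "list_all2 (\<le>) as (chain_roots as cs l l)"
      using as(1) cs(1) by (auto simp: list_all2_conv_all_nth nth_chain_roots)
    then have "count_le (chain_roots as cs l l) x \<le> count_le as x" for x
      by (rule count_le_antimono)
    then show ?thesis
      unfolding rleq_def qs_def as(3) rootcdf_poly_of_roots by (simp add: divide_right_mono)
  qed
  moreover have "qs k \<in> Pd d UNIV" for k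
    unfolding qs_def Pd_def using cs(1) by (intro CollectI exI[of _ "chain_roots as cs l k"]) simp
  ultimately show ?thesis
    by (intro exI[of _ qs]) (simp add: qs_def cs(3))
qed

theorem mainTheorem6:
  fixes d l :: nat and p q :: "real poly"
  assumes "p \<in> Pd d UNIV" and "q \<in> Pd d UNIV" and "l \<le> d"
    and "\<forall>x. rootcdf d q x \<le> rootcdf d p x + real l / real d"
  shows "(\<exists>qs :: nat \<Rightarrow> real poly. qs 0 = q \<and> (\<forall>k\<le>l. qs k \<in> Pd d UNIV) \<and>
            (\<forall>k\<in>{1..l}. interlace d (qs (k - 1)) (qs k)) \<and> rleq d p (qs l))
       \<and> (\<forall>r\<in>Pd d UNIV. \<forall>x. rootcdf d (boxplus d q r) x \<le> rootcdf d (boxplus d p r) x + real l / real d)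
       \<and> (\<forall>r\<in>Pd d {0..}. \<forall>x. rootcdf d (boxtimes d q r) x \<le> rootcdf d (boxtimes d p r) x + real l / real d)"
  using interlacing_chain_exists[OF assms(1,2,4)]
    stable_transform_rootcdf_shift[OF stable_transform_boxplus assms]
    stable_transform_rootcdf_shift[OF stable_transform_boxtimes assms]
  by blast

end
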